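(* Let $N, R, k\in\mathbb{N}$. For every choice of bijections $g_1,\dots,g_R:[N]\to[N]$ there exists a depth-$k$ transformer (with learned embeddings) that, without Chain-of-Thought, solves the $k$-hop factual recall problem, i.e. on every input $(s_0,r_1,\dots,r_k)\in[N]\times[R]^k$ it correctly outputs $(g_{r_k}\circ\cdots\circ g_{r_1})(s_0)$, using either of the following architectures: (1) embedding dimension $d=\tilde O(k)$ and MLP width $O(N\cdot R)$; (2) embedding dimension $d=\tilde O(R^k)$ and MLP width $\tilde O(R^k)$.
   Context: Write $[N]=\{1,\dots,N\}$. Subjects are $[N]$, relations are $[R]$, each relation $r$ has a bijection $g_r:[N]\to[N]$. The transformer is over vocabulary $[N]\cup[R]$ with embeddings in $\mathbb{R}^d$; each layer applies (causal, softmax) multi-head self-attention $Z=\sum_h W_V^{(h)}X(A^{(h)})^\top$ with $A^{(h)}=\mathrm{softmax}((W_K^{(h)}X)^\top(W_Q^{(h)}X))$, a residual connection $\tilde X = Z+X$, and a column-wise ReLU MLP with residual connection $X'=\tilde X+\mathrm{MLP}(\tilde X)$; "depth $k$" means $k$ such layers, and MLP width is its hidden width. The notation $\tilde O(\cdot)$ suppresses logarithmic factors (in $N$, $R$, $k$). *)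

theory Defs
  imports Complex_Main
begin

text \<open>Vectors in R^d are functions nat => real (only indices < d are read);
  d x d' matrices are functions nat => nat => real.\<close>

type_synonym vec = "nat \<Rightarrow> real"
type_synonym mat = "nat \<Rightarrow> nat \<Rightarrow> real"

datatype token = Subj nat | Rel nat

definition vocab :: "nat \<Rightarrow> nat \<Rightarrow> token set" where
  "vocab N R = Subj ` {1..N} \<union> Rel ` {1..R}"

definition mv :: "nat \<Rightarrow> mat \<Rightarrow> vec \<Rightarrow> vec" where
  "mv n A x = (\<lambda>i. \<Sum>j<n. A i j * x j)"

definition ip :: "nat \<Rightarrow> vec \<Rightarrow> vec \<Rightarrow> real" where
  "ip n x y = (\<Sum>i<n. x i * y i)"

text \<open>An attention head: (W_Q, W_K, W_V), all d x d
  (W_K^T W_Q ranges over all d x d bilinear forms).\<close>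
type_synonym head = "mat \<times> mat \<times> mat"

definition attn_score :: "nat \<Rightarrow> head \<Rightarrow> (nat \<Rightarrow> vec) \<Rightarrow> nat \<Rightarrow> nat \<Rightarrow> real" where
  "attn_score d h X j i =
     (case h of (WQ, WK, WV) \<Rightarrow> ip d (mv d WK (X j)) (mv d WQ (X i)))"

definition attn_weight :: "nat \<Rightarrow> head \<Rightarrow> (nat \<Rightarrow> vec) \<Rightarrow> nat \<Rightarrow> nat \<Rightarrow> real" where
  "attn_weight d h X j i =
     exp (attn_score d h X j i) / (\<Sum>j'\<le>i. exp (attn_score d h X j' i))"

definition mhsa :: "nat \<Rightarrow> head list \<Rightarrow> (nat \<Rightarrow> vec) \<Rightarrow> (nat \<Rightarrow> vec)" where
  "mhsa d hs X = (\<lambda>i c. \<Sum>h\<leftarrow>hs. \<Sum>j\<le>i.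
       attn_weight d h X j i * mv d (snd (snd h)) (X j) c)"

definition mlp :: "nat \<Rightarrow> nat \<Rightarrow> mat \<Rightarrow> vec \<Rightarrow> mat \<Rightarrow> vec \<Rightarrow> vec \<Rightarrow> vec" where
  "mlp d m W1 b1 W2 b2 x =
     (let hid = (\<lambda>a. max 0 (mv d W1 x a + b1 a)) in (\<lambda>i. mv m W2 hid i + b2 i))"

type_synonym layer = "head list \<times> mat \<times> vec \<times> mat \<times> vec"

definition apply_layer :: "nat \<Rightarrow> nat \<Rightarrow> layer \<Rightarrow> (nat \<Rightarrow> vec) \<Rightarrow> (nat \<Rightarrow> vec)" where
  "apply_layer d m L X =
     (case L of (hs, W1, b1, W2, b2) \<Rightarrow>
        let Xt = (\<lambda>i c. mhsa d hs X i c + X i c)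
        in (\<lambda>i c. Xt i c + mlp d m W1 b1 W2 b2 (Xt i) c))"

record transformer =
  tf_dim :: nat
  tf_width :: nat
  tf_emb :: "token \<Rightarrow> vec"
  tf_layers :: "layer list"
  tf_unemb :: "token \<Rightarrow> vec"

definition tf_run :: "transformer \<Rightarrow> token list \<Rightarrow> (nat \<Rightarrow> vec)" where
  "tf_run T ts =
     foldl (\<lambda>X L. apply_layer (tf_dim T) (tf_width T) L X)
           (\<lambda>i. tf_emb T (ts ! i)) (tf_layers T)"

definition tf_logit :: "transformer \<Rightarrow> token list \<Rightarrow> token \<Rightarrow> real" where
  "tf_logit T ts t = ip (tf_dim T) (tf_unemb T t) (tf_run T ts (length ts - 1))"

definition tf_outputs :: "transformer \<Rightarrow> token set \<Rightarrow> token list \<Rightarrow> token \<Rightarrow> bool" where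
  "tf_outputs T V ts t \<longleftrightarrow> t \<in> V \<and> (\<forall>t'\<in>V. t' \<noteq> t \<longrightarrow> tf_logit T ts t' < tf_logit T ts t)"

definition khop :: "(nat \<Rightarrow> nat \<Rightarrow> nat) \<Rightarrow> nat \<Rightarrow> nat list \<Rightarrow> nat" where
  "khop g s0 rs = foldl (\<lambda>s r. g r s) s0 rs"

definition solves_khop :: "transformer \<Rightarrow> nat \<Rightarrow> nat \<Rightarrow> nat \<Rightarrow> (nat \<Rightarrow> nat \<Rightarrow> nat) \<Rightarrow> bool" where
  "solves_khop T N R k g \<longleftrightarrow>
     (\<forall>s0\<in>{1..N}. \<forall>rs. length rs = k \<longrightarrow> set rs \<subseteq> {1..R} \<longrightarrow>
        tf_outputs T (vocab N R) (Subj s0 # map Rel rs) (Subj (khop g s0 rs)))"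

end

theory Submission
  imports Defs
begin

text \<open>Both transformers attend uniformly (zero query and key matrices), so each layer's
  attention only averages the prefix and all computation happens in the MLPs. The first layer
  writes 1/(j+1) at every position j; these values differ by at least 1/(k+1)^2 between
  positions, so adding a large multiple of them to the MLP pre-activations of layer l switches
  off every position except l.

  In the first construction, layer l reads at position l the intermediate subject s (averaged
  from position l - 1) and the relation r, and looks up g r s in a table of N R tent functions,
  one per pair (s, r). In the second, the subject embedding stores the answers for all R^k
  relation sequences; layers 1, ..., k - 1 assemble the base-R code z of the relation sequence,
  and the last layer reads off the answer for z with pairs of ReLUs. In both cases the answer a
  is decoded by the logits 2 s a - s^2 = a^2 - (s - a)^2, which are maximal exactly at s = a.\<close>

section \<open>Sums and piecewise-linear gadgets\<close>

lemma sum_lessThan_mult_div_mod: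
  fixes m n :: nat
  shows "(\<Sum>a<m * n. f (a div m) (a mod m)) = (\<Sum>q<n. \<Sum>t<m. f q t)"
proof -
  have "(\<Sum>a<m * n. f (a div m) (a mod m)) = (\<Sum>q<n. \<Sum>a\<in>{q * m..<q * m + m}. f (a div m) (a mod m))"
    using sum.nat_group[where g="\<lambda>a. f (a div m) (a mod m)" and n=n and k=m] by (simp add: mult.commute)
  also have "\<dots> = (\<Sum>q<n. \<Sum>t<m. f q t)"
  proof (rule sum.cong[OF refl])
    fix q
    have "(\<Sum>a\<in>{q * m..<q * m + m}. f (a div m) (a mod m))
        = (\<Sum>t\<in>{0..<m}. f ((t + q * m) div m) ((t + q * m) mod m))"
      using sum.shift_bounds_nat_ivl[of "\<lambda>a. f (a div m) (a mod m)" 0 "q * m" m] by (simp add: add.commute)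
    also have "\<dots> = (\<Sum>t<m. f q t)"
      by (rule sum.cong) auto
    finally show "(\<Sum>a\<in>{q * m..<q * m + m}. f (a div m) (a mod m)) = (\<Sum>t<m. f q t)" .
  qed
  finally show ?thesis .
qed

lemma sum_lessThan_if_eq_mult:
  fixes \<alpha> :: "'a::semiring_0" and x :: "nat \<Rightarrow> 'a"
  shows "(\<Sum>c<d. (if c = a then \<alpha> else 0) * x c) = (if a < d then \<alpha> * x a else 0)"
proof -
  have "(\<Sum>c<d. (if c = a then \<alpha> else 0) * x c) = (\<Sum>c<d. if c = a then \<alpha> * x a else 0)"
    by (rule sum.cong) auto
  then show ?thesis by simp
qed

lemma sum_backward_differences:
  fixes T :: "nat \<Rightarrow> real"
  assumes "z < n"
  shows "(\<Sum>b<n. if b \<le> z then T b - (if b = 0 then 0 else T (b - 1)) else 0) = T z"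
proof -
  have telescope: "(\<Sum>b\<le>z. T b - (if b = 0 then 0 else T (b - 1))) = T z" for z
    by (induction z) auto
  have "(\<Sum>b<n. if b \<le> z then T b - (if b = 0 then 0 else T (b - 1)) else 0)
      = (\<Sum>b\<in>{..<n} \<inter> {b. b \<le> z}. T b - (if b = 0 then 0 else T (b - 1)))"
    by (simp add: sum.inter_restrict)
  also have "{..<n} \<inter> {b. b \<le> z} = {..z}" using assms by auto
  finally show ?thesis using telescope by simp
qed

lemma inverse_Suc_gap:
  assumes "l < i" "i \<le> k"
  shows "1 / (real k + 1)^2 \<le> 1 / (real l + 1) - 1 / (real i + 1)"
proof -
  define P where "P = (real i + 1) * (real l + 1)"
  have P_pos: "P > 0" unfolding P_def by simp
  have "1 / (real l + 1) - 1 / (real i + 1) = (real i - real l) / P"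
    unfolding P_def by (simp add: field_simps)
  moreover have "1 / P \<le> (real i - real l) / P"
    using assms P_pos by (simp add: divide_right_mono)
  moreover have "P \<le> (real k + 1)^2"
    using assms unfolding P_def by (simp add: power2_eq_square mult_mono)
  then have "1 / (real k + 1)^2 \<le> 1 / P" using P_pos by (simp add: frac_le)
  ultimately show ?thesis by linarith
qed

definition tent_coef :: "nat \<Rightarrow> real" where
  "tent_coef t = [2, -4, 2] ! t"

definition tent_shift :: "nat \<Rightarrow> real" where
  "tent_shift t = [1/2, 0, -1/2] ! t"

definition tent :: "real \<Rightarrow> real" where
  "tent x = (\<Sum>t<3. tent_coef t * max 0 (x + tent_shift t))"

lemma tent_eq_0: "1/2 \<le> \<bar>x\<bar> \<Longrightarrow> tent x = 0"
  by (cases "x \<ge> 0") (simp_all add: tent_def tent_coef_def tent_shift_def numeral_3_eq_3 max_def)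

lemma tent_of_nat_diff: "tent (real a - real b) = (if a = b then 1 else 0)"
proof (cases "a = b")
  case False
  then have "\<bar>real a - real b\<bar> \<ge> 1" by linarith
  then show ?thesis using False tent_eq_0 by simp
qed (simp add: tent_def tent_coef_def tent_shift_def numeral_3_eq_3)

lemma relu_gate_diff:
  fixes U H :: real
  assumes "\<bar>U\<bar> \<le> H - 1" "H \<ge> 1"
  shows "max 0 (U + 2 * H * (real z - real b) + H) - max 0 (2 * H * (real z - real b) + H)
       = (if b \<le> z then U else 0)"
proof (cases "b \<le> z")
  case True
  then have "2 * H * (real z - real b) \<ge> 0" using assms by simp
  moreover have "U \<ge> 1 - H" using assms(1) by linarith
  ultimately have "U + 2 * H * (real z - real b) + H \<ge> 0" "2 * H * (real z - real b) + H \<ge> 0"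
    using assms by linarith+
  then show ?thesis using True by simp
next
  case False
  then have "real z - real b \<le> -1" by simp
  then have "2 * H * (real z - real b) \<le> 2 * H * (-1)" by (rule mult_left_mono) (use assms in auto)
  moreover have "U \<le> H - 1" using assms(1) by linarith
  ultimately have "U + 2 * H * (real z - real b) + H \<le> 0" "2 * H * (real z - real b) + H \<le> 0"
    using assms by linarith+
  then show ?thesis using False by simp
qed

section \<open>Base-R codes\<close>

fun radix_enc :: "nat \<Rightarrow> nat list \<Rightarrow> nat" where
  "radix_enc R [] = 0"
| "radix_enc R (r # rs) = (r - 1) + R * radix_enc R rs"

fun radix_dec :: "nat \<Rightarrow> nat \<Rightarrow> nat \<Rightarrow> nat list" where
  "radix_dec R 0 a = []"
| "radix_dec R (Suc k) a = (a mod R + 1) # radix_dec R k (a div R)"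

lemma radix_dec_enc: "set rs \<subseteq> {1..R} \<Longrightarrow> radix_dec R (length rs) (radix_enc R rs) = rs"
proof (induction rs)
  case (Cons r rs)
  then have "r - 1 < R" by auto
  then have "radix_enc R (r # rs) mod R = r - 1" "radix_enc R (r # rs) div R = radix_enc R rs"
    by auto
  then show ?case using Cons by (simp only: length_Cons radix_dec.simps) auto
qed simp

lemma radix_enc_less: "set rs \<subseteq> {1..R} \<Longrightarrow> radix_enc R rs < R ^ length rs"
proof (induction rs)
  case (Cons r rs)
  then have "r - 1 < R" "radix_enc R rs + 1 \<le> R ^ length rs" by auto
  then have "r - 1 + R * radix_enc R rs < R * (radix_enc R rs + 1)" by simp
  also have "\<dots> \<le> R * R ^ length rs" using \<open>radix_enc R rs + 1 \<le> R ^ length rs\<close> by (rule mult_le_mono2)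
  finally show ?case by simp
qed simp

lemma radix_enc_eq_sum:
  "set rs \<subseteq> {1..R} \<Longrightarrow> real (radix_enc R rs) = (\<Sum>i<length rs. real R ^ i * (real (rs ! i) - 1))"
proof (induction rs)
  case (Cons r rs)
  then have "real (radix_enc R (r # rs)) = (real r - 1) + real R * (\<Sum>i<length rs. real R ^ i * (real (rs ! i) - 1))"
    by (simp add: of_nat_diff)
  also have "\<dots> = (\<Sum>i<Suc (length rs). real R ^ i * (real ((r # rs) ! i) - 1))"
    by (subst sum.lessThan_Suc_shift) (simp add: sum_distrib_left mult.assoc)
  finally show ?case by simp
qed simp

lemma radix_dec_range: "R \<ge> 1 \<Longrightarrow> set (radix_dec R k a) \<subseteq> {1..R}"
proof (induction k arbitrary: a)
  case (Suc k)
  have "Suc (a mod R) \<le> R" using Suc.prems by (simp add: Suc_leI)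
  then show ?case using Suc by simp
qed simp

section \<open>Uniformly attending layers\<close>

definition uniform_layer :: "mat \<Rightarrow> mat \<Rightarrow> vec \<Rightarrow> mat \<Rightarrow> layer" where
  "uniform_layer V W1 b1 W2 = ([((\<lambda>_ _. 0), (\<lambda>_ _. 0), V)], W1, b1, W2, (\<lambda>_. 0))"

definition uniform_attn :: "nat \<Rightarrow> mat \<Rightarrow> (nat \<Rightarrow> vec) \<Rightarrow> nat \<Rightarrow> vec" where
  "uniform_attn d V X i = (\<lambda>c. (\<Sum>j\<le>i. mv d V (X j) c) / (real i + 1) + X i c)"

lemma apply_uniform_layer:
  "apply_layer d m (uniform_layer V W1 b1 W2) X i c =
     uniform_attn d V X i c + (\<Sum>a<m. W2 c a * max 0 (mv d W1 (uniform_attn d V X i) a + b1 a))"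
proof -
  have "attn_weight d ((\<lambda>_ _. 0), (\<lambda>_ _. 0), V) X j i = 1 / (real i + 1)" for j
    by (simp add: attn_weight_def attn_score_def ip_def mv_def)
  then show ?thesis
    by (simp add: apply_layer_def uniform_layer_def uniform_attn_def mhsa_def mlp_def sum_divide_distrib)
      (simp add: mv_def)
qed

lemma foldl_apply_layer_induct:
  assumes "P 0 X0"
    and "\<And>l X. l < n \<Longrightarrow> P l X \<Longrightarrow> P (Suc l) (apply_layer d m (lay (Suc l)) X)"
  shows "P n (foldl (\<lambda>X L. apply_layer d m L X) X0 (map lay [1..<Suc n]))"
  using assms(2) by (induction n) (simp_all add: assms(1))

lemma tf_outputs_if_quadratic_logits:
  assumes coords: "co < tf_dim T" "cq < tf_dim T" and w: "w > 0"
    and unemb_Subj: "\<And>s. tf_unemb T (Subj s) =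
      (\<lambda>c. (if c = co then 2 * real s else 0) + (if c = cq then - (w * (real s)\<^sup>2) else 0))"
    and unemb_Rel: "\<And>r. tf_unemb T (Rel r) = (\<lambda>_. 0)"
    and answer: "tf_run T ts (length ts - 1) co = real a"
    and scale: "tf_run T ts (length ts - 1) cq = 1 / w"
    and a: "a \<in> {1..N}"
  shows "tf_outputs T (vocab N R) ts (Subj a)"
proof -
  have logit_Subj: "tf_logit T ts (Subj s) = real a ^ 2 - (real s - real a)^2" for s
  proof -
    define x where "x = tf_run T ts (length ts - 1)"
    have "tf_logit T ts (Subj s) = 2 * real s * x co - w * (real s)\<^sup>2 * x cq"
      using coords unfolding tf_logit_def ip_def unemb_Subj x_def[symmetric]
      by (simp add: distrib_right sum.distrib sum_lessThan_if_eq_mult)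
    also have "\<dots> = 2 * real s * real a - w * (real s)\<^sup>2 * (1 / w)"
      unfolding x_def answer scale ..
    also have "\<dots> = real a ^ 2 - (real s - real a)^2"
      using w by (simp add: power2_eq_square field_simps)
    finally show ?thesis .
  qed
  have logit_Rel: "tf_logit T ts (Rel r) = 0" for r
    unfolding tf_logit_def ip_def unemb_Rel by simp
  show ?thesis unfolding tf_outputs_def
  proof (intro conjI ballI impI)
    show "Subj a \<in> vocab N R" using a by (auto simp: vocab_def)
  next
    fix t assume "t \<in> vocab N R" "t \<noteq> Subj a"
    then show "tf_logit T ts t < tf_logit T ts (Subj a)"
      using a by (cases t) (auto simp: logit_Subj logit_Rel)
  qed
qed

lemma khop_take_Suc:
  "l < length rs \<Longrightarrow> khop g s0 (take (Suc l) rs) = g (rs ! l) (khop g s0 (take l rs))"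
  by (simp add: khop_def take_Suc_conv_app_nth)

lemma khop_in_range:
  assumes "\<forall>r\<in>{1..R}. bij_betw (g r) {1..N} {1..N}" "s0 \<in> {1..N}" "set rs \<subseteq> {1..R}"
  shows "khop g s0 rs \<in> {1..N}"
  using assms(2,3)
proof (induction rs arbitrary: s0)
  case (Cons r rs)
  then have "r \<in> {1..R}" by simp
  then have "g r s0 \<in> {1..N}" using bij_betw_apply[OF bspec[OF assms(1)]] Cons.prems(1) by blast
  then show ?case using Cons by (simp add: khop_def)
qed (simp add: khop_def)

locale khop_problem =
  fixes N R k :: nat and g :: "nat \<Rightarrow> nat \<Rightarrow> nat"
  assumes N_pos: "N \<ge> 1" and R_pos: "R \<ge> 1" and k_pos: "k \<ge> 1"
    and g_bij: "\<forall>r\<in>{1..R}. bij_betw (g r) {1..N} {1..N}"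

locale khop_query = khop_problem +
  fixes s0 :: nat and rs :: "nat list"
  assumes s0_range: "s0 \<in> {1..N}" and length_rs: "length rs = k" and rs_range: "set rs \<subseteq> {1..R}"
begin

definition "tokens = Subj s0 # map Rel rs"

definition "hop l = khop g s0 (take l rs)"

definition "rel_at j = (if j = 0 then 0 else real (rs ! (j - 1)))"

lemma length_tokens: "length tokens = Suc k"
  by (simp add: tokens_def length_rs)

lemma nth_tokens: "j \<le> k \<Longrightarrow> tokens ! j = (if j = 0 then Subj s0 else Rel (rs ! (j - 1)))"
  using length_rs by (cases j) (auto simp: tokens_def)

lemma hop_0: "hop 0 = s0"
  by (simp add: hop_def khop_def)

lemma hop_Suc: "l < k \<Longrightarrow> hop (Suc l) = g (rs ! l) (hop l)"
  unfolding hop_def using khop_take_Suc[of l rs] length_rs by simp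

lemma hop_k: "hop k = khop g s0 rs"
  by (simp add: hop_def length_rs)

lemma hop_range: "hop l \<in> {1..N}"
proof -
  have "set (take l rs) \<subseteq> {1..R}" using set_take_subset[of l rs] rs_range by blast
  then show ?thesis unfolding hop_def by (rule khop_in_range[OF g_bij s0_range])
qed

lemma rel_at_Suc: "l < k \<Longrightarrow> rel_at (Suc l) = real (rs ! l) \<and> rs ! l \<in> {1..R}"
  using rs_range length_rs nth_mem by (fastforce simp: rel_at_def)

lemma rel_at_bounds: "j \<le> k \<Longrightarrow> 0 \<le> rel_at j \<and> rel_at j \<le> real R"
  using rel_at_Suc[of "j - 1"] by (cases j) (auto simp: rel_at_def)

end

context khop_problem
begin

lemma solves_khopI:
  assumes "\<And>s0 rs. khop_query N R k g s0 rs \<Longrightarrow>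
    tf_outputs T (vocab N R) (khop_query.tokens s0 rs) (Subj (khop g s0 rs))"
  shows "solves_khop T N R k g"
  unfolding solves_khop_def
proof (intro ballI allI impI)
  fix s0 rs assume "s0 \<in> {1..N}" "length rs = k" "set rs \<subseteq> {1..R}"
  then interpret khop_query N R k g s0 rs by unfold_locales
  show "tf_outputs T (vocab N R) (Subj s0 # map Rel rs) (Subj (khop g s0 rs))"
    using assms[OF khop_query_axioms] by (simp add: tokens_def)
qed

section \<open>Dimension O(k) and width N R\<close>

definition "hop_dim = 4 + 2 * k"
definition "hop_width = 3 * N * R"

definition "cStart = (0::nat)"
definition "cPos = (1::nat)"
definition "cRel = (2::nat)"
definition "cAvg m = 2 + 2 * (m::nat)"
definition "cHop m = 3 + 2 * (m::nat)"

lemma hop_coords_neq [simp]: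
  "cStart \<noteq> cPos" "cStart \<noteq> cRel" "cPos \<noteq> cRel" "cPos \<noteq> cStart" "cRel \<noteq> cStart" "cRel \<noteq> cPos"
  "cHop m \<noteq> cStart" "cHop m \<noteq> cPos" "cHop m \<noteq> cRel" "cStart \<noteq> cHop m" "cPos \<noteq> cHop m" "cRel \<noteq> cHop m"
  "cAvg m \<noteq> cStart" "cAvg m \<noteq> cPos" "cStart \<noteq> cAvg m" "cPos \<noteq> cAvg m"
  "cAvg m \<noteq> cHop m'" "cHop m' \<noteq> cAvg m"
  "cAvg m = cAvg m' \<longleftrightarrow> m = m'" "cHop m = cHop m' \<longleftrightarrow> m = m'"
  "1 \<le> m \<Longrightarrow> cAvg m \<noteq> cRel" "1 \<le> m \<Longrightarrow> cRel \<noteq> cAvg m"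
  by (auto simp: cStart_def cPos_def cRel_def cAvg_def cHop_def) presburger+

lemma hop_coords_less [simp]:
  "cStart < hop_dim" "cPos < hop_dim" "cRel < hop_dim"
  "m \<le> k \<Longrightarrow> cAvg m < hop_dim" "m \<le> k \<Longrightarrow> cHop m < hop_dim"
  by (auto simp: cStart_def cPos_def cRel_def cAvg_def cHop_def hop_dim_def)

lemma hop_coord_cases:
  assumes "c < hop_dim"
  obtains "c = cStart" | "c = cPos" | "c = cRel" | "c = cHop 0"
    | m where "1 \<le> m" "m \<le> k" "c = cAvg m" | m where "1 \<le> m" "m \<le> k" "c = cHop m"
proof -
  consider "c \<le> 3" | "c \<ge> 4" "even c" | "c \<ge> 4" "odd c" by linarith
  then show ?thesis
  proof cases
    case 1
    then show ?thesis using that unfolding cStart_def cPos_def cRel_def cHop_def by linarith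
  next
    case 2
    then have "c = cAvg (c div 2 - 1)" unfolding cAvg_def by presburger
    then show ?thesis using that(5)[of "c div 2 - 1"] 2 assms unfolding hop_dim_def by linarith
  next
    case 3
    then have "c = cHop (c div 2 - 1)" unfolding cHop_def by presburger
    then show ?thesis using that(6)[of "c div 2 - 1"] 3 assms unfolding hop_dim_def by linarith
  qed
qed

definition "hop_bound = real ((k + 2) * N * (R + 2))"

text \<open>Positions i \<noteq> l are separated in 1/(i+1) by at least 1/(k+1)^2, so
  hop_gain times this separation exceeds hop_bound, which bounds all other
  contributions to the pre-activations.\<close>
definition "hop_gain = (real k + 1)^2 * (hop_bound + 1)"

definition "hop_center l q = real q + 1 + real N + hop_gain / (real l + 1)"

definition "table_val q = real (g (q div N + 1) (q mod N + 1))"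

definition hop_emb :: "token \<Rightarrow> vec" where
  "hop_emb t = (case t of
      Subj s \<Rightarrow> (\<lambda>c. if c = cStart then 1 else if c = cHop 0 then real s else 0)
    | Rel r \<Rightarrow> (\<lambda>c. if c = cRel then real r else 0))"

definition hop_V :: "nat \<Rightarrow> mat" where
  "hop_V l = (\<lambda>c c'. (if c' = cStart then (if l = 1 \<and> c = cPos then 1 else 0) else 0)
                   + (if c' = cHop (l - 1) then (if c = cAvg l then 1 else 0) else 0))"

definition hop_W1 :: "nat \<Rightarrow> mat" where
  "hop_W1 l = (\<lambda>a c'. (if c' = cAvg l then real l + 1 else 0) + (if c' = cRel then real N else 0)
                    + (if c' = cPos then hop_gain else 0))"

text \<open>Hidden unit 3 q + t is the t-th ReLU of the tent for the pair (s, r) with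
  q = (s - 1) + N (r - 1); its output weight is table_val q = g r s.\<close>
definition hop_b1 :: "nat \<Rightarrow> vec" where
  "hop_b1 l = (\<lambda>a. tent_shift (a mod 3) - hop_center l (a div 3))"

definition hop_W2 :: "nat \<Rightarrow> mat" where
  "hop_W2 l = (\<lambda>c a. if c = cHop l then table_val (a div 3) * tent_coef (a mod 3) else 0)"

definition "hop_layer l = uniform_layer (hop_V l) (hop_W1 l) (hop_b1 l) (hop_W2 l)"

definition hop_unemb :: "token \<Rightarrow> vec" where
  "hop_unemb t = (case t of
      Subj s \<Rightarrow> (\<lambda>c. (if c = cHop k then 2 * real s else 0)
                   + (if c = cPos then - ((real k + 1) * (real s)\<^sup>2) else 0))
    | Rel r \<Rightarrow> (\<lambda>_. 0))"

definition hop_transformer :: transformer where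
  "hop_transformer = \<lparr>tf_dim = hop_dim, tf_width = hop_width, tf_emb = hop_emb,
     tf_layers = map hop_layer [1..<Suc k], tf_unemb = hop_unemb\<rparr>"

end

context khop_query
begin

text \<open>The residual stream after l layers: cStart marks position 0, cPos holds 1/(j+1)
  from layer 1 on, cRel the relation, cHop m the m-th intermediate subject (at position m
  only), and cAvg m, for 1 \<le> m, the prefix average of cHop (m - 1); note that cAvg 0 = cRel.\<close>
definition hop_state :: "nat \<Rightarrow> nat \<Rightarrow> nat \<Rightarrow> real" where
  "hop_state l j c =
    (if c = cStart then (if j = 0 then 1 else 0)
     else if c = cPos then (if 1 \<le> l then 1 / (real j + 1) else 0)
     else if c = cRel then rel_at j
     else if even c then
       (let m = c div 2 - 1 in if m \<le> l \<and> m - 1 \<le> j then real (hop (m - 1)) / (real j + 1) else 0)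
     else (let m = c div 2 - 1 in if m \<le> l \<and> j = m then real (hop m) else 0))"

lemma hop_state_simps:
  "hop_state l j cStart = (if j = 0 then 1 else 0)"
  "hop_state l j cPos = (if 1 \<le> l then 1 / (real j + 1) else 0)"
  "hop_state l j cRel = rel_at j"
  "1 \<le> m \<Longrightarrow> hop_state l j (cAvg m) =
     (if m \<le> l \<and> m - 1 \<le> j then real (hop (m - 1)) / (real j + 1) else 0)"
  "hop_state l j (cHop m) = (if m \<le> l \<and> j = m then real (hop m) else 0)"
  by (auto simp: hop_state_def cAvg_def cHop_def cStart_def cPos_def cRel_def Let_def)

definition "hop_stream l X \<longleftrightarrow> (\<forall>j\<le>k. \<forall>c<hop_dim. X j c = hop_state l j c)"

lemma hop_stream_emb: "hop_stream 0 (\<lambda>j. hop_emb (tokens ! j))"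
  unfolding hop_stream_def
proof (intro allI impI)
  fix j c assume j: "j \<le> k" and c: "c < hop_dim"
  from c show "hop_emb (tokens ! j) c = hop_state 0 j c"
    by (cases rule: hop_coord_cases)
      (simp_all add: nth_tokens[OF j] hop_emb_def hop_state_simps rel_at_def hop_0)
qed

lemma hop_attn:
  assumes l: "1 \<le> l" "l \<le> k" and X: "hop_stream (l - 1) X" and i: "i \<le> k" and c: "c < hop_dim"
  shows "uniform_attn hop_dim (hop_V l) X i c = (if c = cHop l then 0 else hop_state l i c)"
proof -
  define A where "A = (if l = 1 \<and> c = cPos then 1 else (0::real))"
  define B where "B = (if c = cAvg l then real (hop (l - 1)) else 0)"
  have copy: "mv hop_dim (hop_V l) (X j) c = (if j = 0 then A else 0) + (if j = l - 1 then B else 0)"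
    if "j \<le> i" for j
  proof -
    have "mv hop_dim (hop_V l) (X j) c
        = (if l = 1 \<and> c = cPos then 1 else 0) * X j cStart + (if c = cAvg l then 1 else 0) * X j (cHop (l - 1))"
      using l unfolding mv_def hop_V_def by (simp add: distrib_right sum.distrib sum_lessThan_if_eq_mult)
    then show ?thesis
      using X that i l unfolding hop_stream_def by (simp add: hop_state_simps A_def B_def)
  qed
  have "(\<Sum>j\<le>i. mv hop_dim (hop_V l) (X j) c) = A + (if l - 1 \<le> i then B else 0)"
    by (simp add: copy sum.distrib)
  moreover have "X i c = hop_state (l - 1) i c"
    using X i c unfolding hop_stream_def by blast
  ultimately have "uniform_attn hop_dim (hop_V l) X i c
      = (A + (if l - 1 \<le> i then B else 0)) / (real i + 1) + hop_state (l - 1) i c"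
    by (simp add: uniform_attn_def)
  with c l show ?thesis
    by (cases rule: hop_coord_cases) (auto simp: A_def B_def hop_state_simps)
qed

definition "hop_preact l i =
  (real l + 1) * (if l - 1 \<le> i then real (hop (l - 1)) / (real i + 1) else 0)
  + real N * rel_at i + hop_gain / (real i + 1)"

lemma hop_W1_attn:
  assumes l: "1 \<le> l" "l \<le> k" and X: "hop_stream (l - 1) X" and i: "i \<le> k"
  shows "mv hop_dim (hop_W1 l) (uniform_attn hop_dim (hop_V l) X i) a = hop_preact l i"
proof -
  have "mv hop_dim (hop_W1 l) (uniform_attn hop_dim (hop_V l) X i) a
      = (real l + 1) * uniform_attn hop_dim (hop_V l) X i (cAvg l)
      + real N * uniform_attn hop_dim (hop_V l) X i cRel + hop_gain * uniform_attn hop_dim (hop_V l) X i cPos"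
    using l unfolding mv_def hop_W1_def by (simp add: distrib_right sum.distrib sum_lessThan_if_eq_mult)
  then show ?thesis
    using l i by (simp add: hop_attn[OF l X i] hop_state_simps hop_preact_def)
qed

lemma hop_table_hit:
  assumes l: "1 \<le> l" "l \<le> k"
  shows "(\<Sum>q<N * R. table_val q * tent (hop_preact l l - hop_center l q)) = real (hop l)"
proof -
  define r where "r = rs ! (l - 1)"
  define s where "s = hop (l - 1)"
  have r: "r \<in> {1..R}" "rel_at l = real r" using rel_at_Suc[of "l - 1"] l by (auto simp: r_def)
  have s: "s \<in> {1..N}" using hop_range by (simp add: s_def)
  define q0 where "q0 = (s - 1) + N * (r - 1)"
  have "hop_preact l l = real s + real N * real r + hop_gain / (real l + 1)"
    using r unfolding hop_preact_def s_def by simp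
  moreover have "real q0 = real s - 1 + real N * (real r - 1)"
    using r s unfolding q0_def by (simp add: of_nat_diff)
  ultimately have "hop_preact l l - hop_center l q = real q0 - real q" for q
    unfolding hop_center_def by (simp add: algebra_simps)
  then have "(\<Sum>q<N * R. table_val q * tent (hop_preact l l - hop_center l q))
      = (\<Sum>q<N * R. if q0 = q then table_val q else 0)"
    by (intro sum.cong) (simp_all add: tent_of_nat_diff)
  also have "\<dots> = table_val q0"
  proof -
    have "q0 \<le> (N - 1) + N * (R - 1)" unfolding q0_def using r s by (intro add_mono mult_le_mono) auto
    also have "\<dots> < N * R" using N_pos R_pos by (simp add: algebra_simps diff_mult_distrib2)
    finally show ?thesis by simp
  qed
  also have "table_val q0 = real (g r s)"
  proof -
    have "s - 1 < N" using s by auto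
    then have "q0 div N = r - 1" "q0 mod N = s - 1" unfolding q0_def by auto
    then show ?thesis unfolding table_val_def using r s by simp
  qed
  also have "g r s = hop l" using hop_Suc[of "l - 1"] l by (simp add: r_def s_def)
  finally show ?thesis .
qed

lemma hop_table_miss:
  assumes l: "1 \<le> l" "l \<le> k" and i: "i \<le> k" "i \<noteq> l" and q: "q < N * R"
  shows "tent (hop_preact l i - hop_center l q) = 0"
proof (rule tent_eq_0)
  define A where "A = (real l + 1) * (if l - 1 \<le> i then real (hop (l - 1)) / (real i + 1) else 0)"
  define Y where "Y = A + real N * rel_at i - (real q + 1 + real N)"
  have split: "hop_preact l i - hop_center l q = Y + hop_gain * (1 / (real i + 1) - 1 / (real l + 1))"
    unfolding hop_preact_def hop_center_def Y_def A_def by (simp add: algebra_simps add_divide_distrib)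
  have "\<bar>Y\<bar> \<le> hop_bound"
  proof -
    have "real (hop (l - 1)) \<le> real N * 1" using hop_range[of "l - 1"] by auto
    also have "\<dots> \<le> real N * (real i + 1)" by (intro mult_left_mono) auto
    finally have "(if l - 1 \<le> i then real (hop (l - 1)) / (real i + 1) else 0) \<le> real N"
      by (simp add: divide_le_eq)
    then have "A \<le> (real k + 1) * real N" unfolding A_def using l by (intro mult_mono) auto
    then have "A \<le> real k * real N + real N" by (simp add: algebra_simps)
    moreover have "0 \<le> A" unfolding A_def by simp
    moreover have "0 \<le> real N * rel_at i" "real N * rel_at i \<le> real N * real R"
      using rel_at_bounds[OF i(1)] by (auto intro: mult_left_mono)
    moreover have "real q + 1 \<le> real N * real R" using q
      by (metis Suc_leI add.commute of_nat_Suc of_nat_le_iff of_nat_mult plus_1_eq_Suc)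
    moreover have "hop_bound = real k * real N * real R + 2 * (real k * real N) + 2 * (real N * real R) + 4 * real N"
      unfolding hop_bound_def by (simp add: algebra_simps)
    moreover have "0 \<le> real k * real N * real R" "0 \<le> real k * real N" "0 \<le> real N * real R"
      "0 \<le> real q" by auto
    ultimately show ?thesis unfolding Y_def abs_le_iff by linarith
  qed
  moreover have "hop_bound + 1 \<le> \<bar>hop_gain * (1 / (real i + 1) - 1 / (real l + 1))\<bar>"
  proof -
    have "1 / (real k + 1)^2 \<le> \<bar>1 / (real i + 1) - 1 / (real l + 1)\<bar>"
      using i l inverse_Suc_gap[of i l k] inverse_Suc_gap[of l i k] by (cases "i < l") auto
    then have "hop_gain * (1 / (real k + 1)^2) \<le> hop_gain * \<bar>1 / (real i + 1) - 1 / (real l + 1)\<bar>"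
      by (rule mult_left_mono) (simp add: hop_gain_def hop_bound_def)
    then show ?thesis by (simp add: hop_gain_def hop_bound_def abs_mult)
  qed
  ultimately show "1/2 \<le> \<bar>hop_preact l i - hop_center l q\<bar>" unfolding split by linarith
qed

lemma hop_mlp:
  assumes l: "1 \<le> l" "l \<le> k" and X: "hop_stream (l - 1) X" and i: "i \<le> k"
  shows "(\<Sum>a<hop_width. hop_W2 l c a *
            max 0 (mv hop_dim (hop_W1 l) (uniform_attn hop_dim (hop_V l) X i) a + hop_b1 l a))
       = (if c = cHop l \<and> i = l then real (hop l) else 0)"
proof (cases "c = cHop l")
  case True
  have "(\<Sum>a<hop_width. hop_W2 l c a *
            max 0 (mv hop_dim (hop_W1 l) (uniform_attn hop_dim (hop_V l) X i) a + hop_b1 l a))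
      = (\<Sum>a<3 * (N * R). table_val (a div 3) * tent_coef (a mod 3) *
            max 0 (hop_preact l i - hop_center l (a div 3) + tent_shift (a mod 3)))"
    using True by (simp add: hop_width_def mult.assoc hop_W2_def hop_b1_def hop_W1_attn[OF l X i] algebra_simps)
  also have "\<dots> = (\<Sum>q<N * R. \<Sum>t<3. table_val q * tent_coef t *
            max 0 (hop_preact l i - hop_center l q + tent_shift t))"
    by (rule sum_lessThan_mult_div_mod)
  also have "\<dots> = (\<Sum>q<N * R. table_val q * tent (hop_preact l i - hop_center l q))"
    by (simp add: tent_def sum_distrib_left mult.assoc)
  also have "\<dots> = (if i = l then real (hop l) else 0)"
    using hop_table_hit[OF l] hop_table_miss[OF l i] by simp
  finally show ?thesis using True by simp
qed (simp add: hop_W2_def)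

lemma hop_stream_step:
  assumes l: "1 \<le> l" "l \<le> k" and X: "hop_stream (l - 1) X"
  shows "hop_stream l (apply_layer hop_dim hop_width (hop_layer l) X)"
  unfolding hop_stream_def hop_layer_def apply_uniform_layer
  using l by (auto simp: hop_attn[OF l X] hop_mlp[OF l X] hop_state_simps)

lemma hop_stream_run: "hop_stream k (tf_run hop_transformer tokens)"
proof -
  have "hop_stream k (foldl (\<lambda>X L. apply_layer hop_dim hop_width L X) (\<lambda>j. hop_emb (tokens ! j))
      (map hop_layer [1..<Suc k]))"
    by (rule foldl_apply_layer_induct) (simp_all add: hop_stream_emb hop_stream_step)
  then show ?thesis by (simp add: tf_run_def hop_transformer_def del: upt_Suc)
qed

lemma hop_transformer_outputs: "tf_outputs hop_transformer (vocab N R) tokens (Subj (khop g s0 rs))"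
proof (rule tf_outputs_if_quadratic_logits[where co = "cHop k" and cq = cPos and w = "real k + 1"])
  show "tf_unemb hop_transformer (Subj s) = (\<lambda>c. (if c = cHop k then 2 * real s else 0)
          + (if c = cPos then - ((real k + 1) * (real s)\<^sup>2) else 0))" for s
    by (simp add: hop_transformer_def hop_unemb_def)
  show "tf_run hop_transformer tokens (length tokens - 1) (cHop k) = real (khop g s0 rs)"
    using hop_stream_run by (simp add: hop_stream_def length_tokens hop_state_simps hop_k)
  show "tf_run hop_transformer tokens (length tokens - 1) cPos = 1 / (real k + 1)"
    using hop_stream_run k_pos by (simp add: hop_stream_def length_tokens hop_state_simps)
  show "khop g s0 rs \<in> {1..N}" using hop_range[of k] by (simp add: hop_k)
qed (simp_all add: hop_transformer_def hop_unemb_def)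

end

context khop_problem
begin

lemma hop_transformer_solves: "solves_khop hop_transformer N R k g"
  using khop_query.hop_transformer_outputs by (rule solves_khopI)

lemma hop_transformer_size:
  "length (tf_layers hop_transformer) = k" "tf_dim hop_transformer = 4 + 2 * k"
  "tf_width hop_transformer = 3 * N * R"
  by (simp_all add: hop_transformer_def hop_dim_def hop_width_def)

section \<open>Dimension and width O(R^k)\<close>

definition "code_dim = 6 + R ^ k"
definition "code_width = 2 * R ^ k"

definition "eStart = (0::nat)"
definition "ePos = (1::nat)"
definition "eSeen = (2::nat)"
definition "eOut = (3::nat)"
definition "eRel = (4::nat)"
definition "eCode = (5::nat)"
definition "eTab a = 6 + (a::nat)"

lemma code_coords_neq [simp]:
  "eStart \<noteq> ePos" "eStart \<noteq> eSeen" "eStart \<noteq> eOut" "eStart \<noteq> eRel" "eStart \<noteq> eCode"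
  "ePos \<noteq> eStart" "ePos \<noteq> eSeen" "ePos \<noteq> eOut" "ePos \<noteq> eRel" "ePos \<noteq> eCode"
  "eSeen \<noteq> eStart" "eSeen \<noteq> ePos" "eSeen \<noteq> eOut" "eSeen \<noteq> eRel" "eSeen \<noteq> eCode"
  "eOut \<noteq> eStart" "eOut \<noteq> ePos" "eOut \<noteq> eSeen" "eOut \<noteq> eRel" "eOut \<noteq> eCode"
  "eRel \<noteq> eStart" "eRel \<noteq> ePos" "eRel \<noteq> eSeen" "eRel \<noteq> eOut" "eRel \<noteq> eCode"
  "eCode \<noteq> eStart" "eCode \<noteq> ePos" "eCode \<noteq> eSeen" "eCode \<noteq> eOut" "eCode \<noteq> eRel"
  "\<not> eTab 0 \<le> eStart" "\<not> eTab 0 \<le> ePos" "\<not> eTab 0 \<le> eSeen" "\<not> eTab 0 \<le> eOut"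
  "\<not> eTab 0 \<le> eRel" "\<not> eTab 0 \<le> eCode"
  "eTab a \<noteq> eStart" "eTab a \<noteq> ePos" "eTab a \<noteq> eSeen" "eTab a \<noteq> eOut" "eTab a \<noteq> eRel"
  "eTab a \<noteq> eCode"
  "eTab 0 \<le> eTab a" "eTab a - eTab 0 = a" "eTab a = eTab b \<longleftrightarrow> a = b"
  by (auto simp: eStart_def ePos_def eSeen_def eOut_def eRel_def eCode_def eTab_def)

lemma code_coords_less [simp]:
  "eStart < code_dim" "ePos < code_dim" "eSeen < code_dim" "eOut < code_dim" "eRel < code_dim"
  "eCode < code_dim" "a < R ^ k \<Longrightarrow> eTab a < code_dim"
  by (auto simp: eStart_def ePos_def eSeen_def eOut_def eRel_def eCode_def eTab_def code_dim_def)

lemma code_coord_cases: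
  assumes "c < code_dim"
  obtains "c = eStart" | "c = ePos" | "c = eSeen" | "c = eOut" | "c = eRel" | "c = eCode"
    | a where "a < R ^ k" "c = eTab a"
proof (cases "c < 6")
  case True
  then show ?thesis using that
    unfolding eStart_def ePos_def eSeen_def eOut_def eRel_def eCode_def by linarith
next
  case False
  then have "c = eTab (c - 6)" "c - 6 < R ^ k" using assms by (auto simp: eTab_def code_dim_def)
  then show ?thesis using that(7) by blast
qed

definition "answer s a = real (khop g s (radix_dec R k a))"

text \<open>The subject embedding stores the answers for all R^k relation sequences as backward
  differences: the answer for the sequence with code z is the sum of the entries up to z,
  which the last layer selects with pairs of ReLUs.\<close>
definition "answer_diff s a = answer s a - (if a = 0 then 0 else answer s (a - 1))"

definition "code_H = real N + 1"
definition "code_W = real (R ^ k) + 1"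
definition "code_gain = code_W * (real k + 1)^2"

definition code_emb :: "token \<Rightarrow> vec" where
  "code_emb t = (case t of
      Subj s \<Rightarrow> (\<lambda>c. if c = eStart \<or> c = eSeen then 1 else if eTab 0 \<le> c then answer_diff s (c - eTab 0) else 0)
    | Rel r \<Rightarrow> (\<lambda>c. if c = eRel then real r else 0))"

definition code_V :: "nat \<Rightarrow> mat" where
  "code_V l = (\<lambda>c c'. (if c' = eStart then (if l = 1 \<and> c = ePos then 1 else 0) else 0)
                    + (if c' = c then (if l = k \<and> (c = eCode \<or> eTab 0 \<le> c) then 1 else 0) else 0))"

definition code_W1 :: "nat \<Rightarrow> mat" where
  "code_W1 l = (\<lambda>a c'. (if c' = eRel then (if a = 0 then real R ^ (l - 1) else 0) else 0)
      + (if c' = ePos then (if a \<le> 1 then code_gain else 0) else 0)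
      + (if c' = eSeen then (if a \<le> 1 then - (code_gain + code_W) else 0) else 0))"

definition code_b1 :: "nat \<Rightarrow> vec" where
  "code_b1 l = (\<lambda>a. if a = 0 then - (real R ^ (l - 1)) - code_gain / (real l + 1)
                   else if a = 1 then 1 - code_gain / (real l + 1) else 0)"

definition code_W2 :: mat where
  "code_W2 = (\<lambda>c a. (if a = 0 then (if c = eCode then 1 else 0) else 0)
                  + (if a = 1 then (if c = eSeen then 1 else 0) else 0))"

definition final_W1 :: mat where
  "final_W1 = (\<lambda>a c'. (if c' = eTab (a div 2) then (if a mod 2 = 0 then real k + 1 else 0) else 0)
      + (if c' = eCode then 2 * code_H * (real k + 1) else 0)
      + (if c' = eRel then 2 * code_H * real R ^ (k - 1) else 0))"

definition final_b1 :: vec where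
  "final_b1 = (\<lambda>a. code_H - 2 * code_H * (real R ^ (k - 1) + real (a div 2)))"

definition final_W2 :: mat where
  "final_W2 = (\<lambda>c a. if c = eOut then (if a mod 2 = 0 then 1 else -1) else 0)"

definition "code_layer l =
  (if l < k then uniform_layer (code_V l) (code_W1 l) (code_b1 l) code_W2
   else uniform_layer (code_V l) final_W1 final_b1 final_W2)"

definition code_unemb :: "token \<Rightarrow> vec" where
  "code_unemb t = (case t of
      Subj s \<Rightarrow> (\<lambda>c. (if c = eOut then 2 * real s else 0)
                   + (if c = ePos then - ((real k + 1) * (real s)\<^sup>2) else 0))
    | Rel r \<Rightarrow> (\<lambda>_. 0))"

definition code_transformer :: transformer where
  "code_transformer = \<lparr>tf_dim = code_dim, tf_width = code_width, tf_emb = code_emb,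
     tf_layers = map code_layer [1..<Suc k], tf_unemb = code_unemb\<rparr>"

lemma answer_range: "s \<in> {1..N} \<Longrightarrow> answer s a \<in> {1..real N}"
  using khop_in_range[OF g_bij _ radix_dec_range[OF R_pos]] by (force simp: answer_def)

lemma answer_diff_bound: "s \<in> {1..N} \<Longrightarrow> \<bar>answer_diff s a\<bar> \<le> code_H - 1"
  using answer_range[of s a] answer_range[of s "a - 1"]
  unfolding answer_diff_def code_H_def by (auto simp: abs_le_iff)

end

context khop_query
begin

text \<open>The residual stream after l < k layers: eSeen flags the positions j \<le> l, and
  layer j writes the j-th base-R digit of the relation sequence, scaled by R^(j-1), into
  eCode at position j.\<close>
definition code_state :: "nat \<Rightarrow> nat \<Rightarrow> nat \<Rightarrow> real" where
  "code_state l j c =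
    (if c = eStart then (if j = 0 then 1 else 0)
     else if c = ePos then (if 1 \<le> l then 1 / (real j + 1) else 0)
     else if c = eSeen then (if j \<le> l then 1 else 0)
     else if c = eOut then 0
     else if c = eRel then rel_at j
     else if c = eCode then (if 1 \<le> j \<and> j \<le> l then real R ^ (j - 1) * (rel_at j - 1) else 0)
     else if eTab 0 \<le> c then (if j = 0 then answer_diff s0 (c - eTab 0) else 0)
     else 0)"

lemma code_state_simps:
  "code_state l j eStart = (if j = 0 then 1 else 0)"
  "code_state l j ePos = (if 1 \<le> l then 1 / (real j + 1) else 0)"
  "code_state l j eSeen = (if j \<le> l then 1 else 0)"
  "code_state l j eOut = 0"
  "code_state l j eRel = rel_at j"
  "code_state l j eCode = (if 1 \<le> j \<and> j \<le> l then real R ^ (j - 1) * (rel_at j - 1) else 0)"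
  "code_state l j (eTab a) = (if j = 0 then answer_diff s0 a else 0)"
  unfolding code_state_def by simp_all

definition "code_stream l X \<longleftrightarrow> (\<forall>j\<le>k. \<forall>c<code_dim. X j c = code_state l j c)"

lemma code_stream_emb: "code_stream 0 (\<lambda>j. code_emb (tokens ! j))"
  unfolding code_stream_def
proof (intro allI impI)
  fix j c assume j: "j \<le> k" and c: "c < code_dim"
  from c show "code_emb (tokens ! j) c = code_state 0 j c"
    by (cases rule: code_coord_cases)
      (simp_all add: nth_tokens[OF j] code_emb_def code_state_simps rel_at_def)
qed

lemma code_attn:
  assumes l: "1 \<le> l" "l < k" and X: "code_stream (l - 1) X" and i: "i \<le> k" and c: "c < code_dim"
  shows "uniform_attn code_dim (code_V l) X i c = (if c = ePos then 1 / (real i + 1) else code_state (l - 1) i c)"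
proof -
  define A where "A = (if l = 1 \<and> c = ePos then 1 else (0::real))"
  have copy: "mv code_dim (code_V l) (X j) c = (if j = 0 then A else 0)" if "j \<le> k" for j
  proof -
    have "mv code_dim (code_V l) (X j) c = A * X j eStart"
      using l c unfolding mv_def code_V_def A_def by (simp add: distrib_right sum.distrib sum_lessThan_if_eq_mult)
    then show ?thesis using X that unfolding code_stream_def by (simp add: code_state_simps)
  qed
  have "(\<Sum>j\<le>i. mv code_dim (code_V l) (X j) c) = A"
    using i by (simp add: copy)
  then show ?thesis
    using X i c l unfolding uniform_attn_def code_stream_def A_def by (auto simp: code_state_simps)
qed

text \<open>The gate vanishes at position l and is at most -code_W elsewhere: later positions are
  pushed down by the gap in 1/(i+1), earlier ones by the eSeen flag.\<close>
definition "code_gate l i =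
  code_gain * (1 / (real i + 1) - 1 / (real l + 1)) - (code_gain + code_W) * (if i \<le> l - 1 then 1 else 0)"

lemma code_gate_self: "1 \<le> l \<Longrightarrow> code_gate l l = 0"
  by (cases l) (simp_all add: code_gate_def)

lemma code_gate_other:
  assumes "1 \<le> l" "i \<le> k" "i \<noteq> l"
  shows "code_gate l i \<le> - code_W"
proof -
  have gain: "code_gain \<ge> 0" by (simp add: code_gain_def code_W_def)
  consider "l < i" | "i < l" using assms by linarith
  then show ?thesis
  proof cases
    case 1
    have "code_gain * (1 / (real i + 1) - 1 / (real l + 1)) \<le> code_gain * (- (1 / (real k + 1)^2))"
      using inverse_Suc_gap[OF 1 assms(2)] gain by (intro mult_left_mono) auto
    moreover have "\<not> i \<le> l - 1" using 1 by linarith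
    ultimately show ?thesis by (simp add: code_gate_def code_gain_def)
  next
    case 2
    have "1 / (real i + 1) \<le> 1" "0 \<le> 1 / (real l + 1)" by simp_all
    then have "1 / (real i + 1) - 1 / (real l + 1) \<le> 1" by linarith
    then have "code_gain * (1 / (real i + 1) - 1 / (real l + 1)) \<le> code_gain * 1"
      using gain by (rule mult_left_mono)
    moreover have "i \<le> l - 1" using 2 by linarith
    ultimately show ?thesis by (simp add: code_gate_def)
  qed
qed

lemma code_mlp:
  assumes l: "1 \<le> l" "l < k" and X: "code_stream (l - 1) X" and i: "i \<le> k"
  shows "(\<Sum>a<code_width. code_W2 c a *
            max 0 (mv code_dim (code_W1 l) (uniform_attn code_dim (code_V l) X i) a + code_b1 l a))
       = (if c = eCode \<and> i = l then real R ^ (l - 1) * (rel_at l - 1) else 0)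
       + (if c = eSeen \<and> i = l then 1 else 0)"
proof -
  define Xt where "Xt = uniform_attn code_dim (code_V l) X i"
  have Xt: "Xt eRel = rel_at i" "Xt ePos = 1 / (real i + 1)" "Xt eSeen = (if i \<le> l - 1 then 1 else 0)"
    unfolding Xt_def using code_attn[OF l X i] by (simp_all add: code_state_simps)
  have preact: "mv code_dim (code_W1 l) Xt a
      = (if a = 0 then real R ^ (l - 1) else 0) * Xt eRel + (if a \<le> 1 then code_gain else 0) * Xt ePos
      + (if a \<le> 1 then - (code_gain + code_W) else 0) * Xt eSeen" for a
    unfolding mv_def code_W1_def by (simp add: distrib_right sum.distrib sum_lessThan_if_eq_mult)
  have unit0: "mv code_dim (code_W1 l) Xt 0 + code_b1 l 0 = real R ^ (l - 1) * (rel_at i - 1) + code_gate l i"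
    unfolding preact Xt code_b1_def code_gate_def by (simp add: algebra_simps)
  have unit1: "mv code_dim (code_W1 l) Xt 1 + code_b1 l 1 = 1 + code_gate l i"
    unfolding preact Xt code_b1_def code_gate_def by (simp add: algebra_simps)
  have digit_le: "real R ^ (l - 1) * (rel_at i - 1) \<le> code_W - 1"
  proof -
    have "real R ^ (l - 1) * (rel_at i - 1) \<le> real R ^ (l - 1) * real R"
      using rel_at_bounds[OF i] by (intro mult_left_mono) auto
    also have "\<dots> = real R ^ l" using l by (simp flip: power_Suc2)
    also have "\<dots> \<le> real R ^ k" using R_pos l by (intro power_increasing) auto
    finally show ?thesis by (simp add: code_W_def)
  qed
  have "rel_at l \<ge> 1" using rel_at_Suc[of "l - 1"] l by auto
  then have relu0: "max 0 (real R ^ (l - 1) * (rel_at i - 1) + code_gate l i)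
      = (if i = l then real R ^ (l - 1) * (rel_at l - 1) else 0)"
    using code_gate_self[OF l(1)] code_gate_other[OF l(1) i] digit_le by auto
  have "1 \<le> code_W" by (simp add: code_W_def)
  then have "1 + code_gate l i \<le> 0" if "i \<noteq> l"
    using code_gate_other[OF l(1) i that] by linarith
  then have relu1: "max 0 (1 + code_gate l i) = (if i = l then 1 else 0)"
    using code_gate_self[OF l(1)] by auto
  have "code_width \<ge> 2" using R_pos by (simp add: code_width_def)
  then have "(\<Sum>a<code_width. code_W2 c a * max 0 (mv code_dim (code_W1 l) Xt a + code_b1 l a))
      = (if c = eCode then 1 else 0) * max 0 (mv code_dim (code_W1 l) Xt 0 + code_b1 l 0)
      + (if c = eSeen then 1 else 0) * max 0 (mv code_dim (code_W1 l) Xt 1 + code_b1 l 1)"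
    unfolding code_W2_def by (simp only: distrib_right sum.distrib sum_lessThan_if_eq_mult) simp
  then show ?thesis
    unfolding Xt_def[symmetric] unit0 unit1 relu0 relu1 by auto
qed

lemma code_stream_step:
  assumes l: "1 \<le> l" "l < k" and X: "code_stream (l - 1) X"
  shows "code_stream l (apply_layer code_dim code_width (code_layer l) X)"
  unfolding code_stream_def
proof (intro allI impI)
  fix j c assume j: "j \<le> k" and c: "c < code_dim"
  have "code_layer l = uniform_layer (code_V l) (code_W1 l) (code_b1 l) code_W2"
    using l by (simp add: code_layer_def)
  moreover from c l have "(if c = ePos then 1 / (real j + 1) else code_state (l - 1) j c)
      + ((if c = eCode \<and> j = l then real R ^ (l - 1) * (rel_at l - 1) else 0)
      + (if c = eSeen \<and> j = l then 1 else 0)) = code_state l j c"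
    by (cases rule: code_coord_cases) (auto simp: code_state_simps)
  ultimately show "apply_layer code_dim code_width (code_layer l) X j c = code_state l j c"
    by (simp add: apply_uniform_layer code_attn[OF l X j c] code_mlp[OF l X j])
qed

lemma code_digits_sum:
  "(\<Sum>j\<le>k. code_state (k - 1) j eCode) + real R ^ (k - 1) * (rel_at k - 1) = real (radix_enc R rs)"
proof -
  define n where "n = k - 1"
  have k: "Suc n = k" using k_pos by (simp add: n_def)
  define f where "f j = real R ^ (j - 1) * (rel_at j - 1)" for j
  have "{..k} = insert k {..n}" "\<not> k \<le> n" using k by auto
  then have "(\<Sum>j\<le>k. code_state n j eCode) = (\<Sum>j\<le>n. code_state n j eCode)"
    by (simp add: code_state_simps)
  also have "\<dots> = code_state n 0 eCode + (\<Sum>i<n. code_state n (Suc i) eCode)"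
    by (rule sum.atMost_shift)
  also have "\<dots> = (\<Sum>i<n. f (Suc i))"
    by (auto simp: code_state_simps f_def intro!: sum.cong)
  finally have "(\<Sum>j\<le>k. code_state n j eCode) + f k = (\<Sum>i<k. f (Suc i))"
    by (simp flip: k)
  also have "\<dots> = (\<Sum>i<length rs. real R ^ i * (real (rs ! i) - 1))"
    using rel_at_Suc by (auto simp: length_rs f_def intro!: sum.cong)
  also have "\<dots> = real (radix_enc R rs)"
    using radix_enc_eq_sum[OF rs_range] by simp
  finally show ?thesis by (simp add: n_def f_def)
qed

lemma code_final_attn:
  assumes X: "code_stream (k - 1) X"
  shows "uniform_attn code_dim (code_V k) X k ePos = 1 / (real k + 1)"
    and "uniform_attn code_dim (code_V k) X k eRel = rel_at k"
    and "uniform_attn code_dim (code_V k) X k eOut = 0"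
    and "uniform_attn code_dim (code_V k) X k eCode = (\<Sum>j\<le>k. code_state (k - 1) j eCode) / (real k + 1)"
    and "a < R ^ k \<Longrightarrow> uniform_attn code_dim (code_V k) X k (eTab a) = answer_diff s0 a / (real k + 1)"
proof -
  have copy: "mv code_dim (code_V k) (X j) c
      = (if k = 1 \<and> c = ePos then 1 else 0) * code_state (k - 1) j eStart
      + (if c = eCode \<or> eTab 0 \<le> c then 1 else 0) * code_state (k - 1) j c"
    if "j \<le> k" "c < code_dim" for j c
  proof -
    have "mv code_dim (code_V k) (X j) c
        = (if k = 1 \<and> c = ePos then 1 else 0) * X j eStart + (if c = eCode \<or> eTab 0 \<le> c then 1 else 0) * X j c"
      using that unfolding mv_def code_V_def by (simp add: distrib_right sum.distrib sum_lessThan_if_eq_mult)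
    then show ?thesis using X that unfolding code_stream_def by simp
  qed
  have X_k: "X k c = code_state (k - 1) k c" if "c < code_dim" for c
    using X that unfolding code_stream_def by simp
  have not_last: "\<not> k \<le> k - 1" using k_pos by simp
  have "(\<Sum>j\<le>k. mv code_dim (code_V k) (X j) ePos) = (if k = 1 then 1 else 0)"
    by (simp add: copy code_state_simps)
  then have "uniform_attn code_dim (code_V k) X k ePos
      = ((if k = 1 then 1 else 0) + (if 1 \<le> k - 1 then 1 else 0)) / (real k + 1)"
    by (simp add: uniform_attn_def X_k code_state_simps add_divide_distrib)
  also have "(if k = 1 then 1 else 0) + (if 1 \<le> k - 1 then 1 else 0) = (1::real)"
    using k_pos by auto
  finally show "uniform_attn code_dim (code_V k) X k ePos = 1 / (real k + 1)" .
  show "uniform_attn code_dim (code_V k) X k eRel = rel_at k"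
    by (simp add: uniform_attn_def X_k copy code_state_simps)
  show "uniform_attn code_dim (code_V k) X k eOut = 0"
    by (simp add: uniform_attn_def X_k copy code_state_simps)
  show "uniform_attn code_dim (code_V k) X k eCode = (\<Sum>j\<le>k. code_state (k - 1) j eCode) / (real k + 1)"
    using not_last by (simp add: uniform_attn_def X_k copy code_state_simps)
  show "uniform_attn code_dim (code_V k) X k (eTab a) = answer_diff s0 a / (real k + 1)" if "a < R ^ k"
    using that not_last by (simp add: uniform_attn_def X_k copy code_state_simps)
qed

lemma code_final_preact:
  assumes X: "code_stream (k - 1) X" and a: "a < code_width"
  shows "mv code_dim final_W1 (uniform_attn code_dim (code_V k) X k) a + final_b1 a
       = (if a mod 2 = 0 then answer_diff s0 (a div 2) else 0)
         + 2 * code_H * (real (radix_enc R rs) - real (a div 2)) + code_H"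
proof -
  define Xt where "Xt = uniform_attn code_dim (code_V k) X k"
  define S where "S = (\<Sum>j\<le>k. code_state (k - 1) j eCode)"
  define w where "w = real k + 1"
  have w: "w \<noteq> 0" by (simp add: w_def)
  have b: "a div 2 < R ^ k" using a by (simp add: code_width_def)
  have "mv code_dim final_W1 Xt a
      = (if a mod 2 = 0 then w else 0) * Xt (eTab (a div 2)) + 2 * code_H * w * Xt eCode
      + 2 * code_H * real R ^ (k - 1) * Xt eRel"
    using b unfolding mv_def final_W1_def w_def
    by (simp add: distrib_right sum.distrib sum_lessThan_if_eq_mult)
  also have "\<dots> = (if a mod 2 = 0 then answer_diff s0 (a div 2) else 0)
      + 2 * code_H * (S + real R ^ (k - 1) * rel_at k)"
    unfolding Xt_def code_final_attn[OF X] code_final_attn(5)[OF X b] S_def w_def[symmetric]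
    using w by (simp add: algebra_simps)
  also have "S = real (radix_enc R rs) - real R ^ (k - 1) * (rel_at k - 1)"
    using code_digits_sum unfolding S_def by linarith
  finally show ?thesis
    unfolding Xt_def final_b1_def by (simp add: algebra_simps)
qed

lemma code_final_mlp:
  assumes X: "code_stream (k - 1) X"
  shows "(\<Sum>a<code_width. final_W2 eOut a *
            max 0 (mv code_dim final_W1 (uniform_attn code_dim (code_V k) X k) a + final_b1 a))
       = real (khop g s0 rs)"
proof -
  define z where "z = radix_enc R rs"
  have z: "z < R ^ k" using radix_enc_less[OF rs_range] length_rs by (simp add: z_def)
  have "(\<Sum>a<code_width. final_W2 eOut a *
            max 0 (mv code_dim final_W1 (uniform_attn code_dim (code_V k) X k) a + final_b1 a))
      = (\<Sum>a<2 * R ^ k. (if a mod 2 = 0 then 1 else -1) *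
            max 0 ((if a mod 2 = 0 then answer_diff s0 (a div 2) else 0)
                   + 2 * code_H * (real z - real (a div 2)) + code_H))"
    by (intro sum.cong) (simp_all add: code_width_def final_W2_def code_final_preact[OF X] z_def)
  also have "\<dots> = (\<Sum>b<R ^ k. \<Sum>t<(2::nat). (if t = 0 then 1 else -1) *
            max 0 ((if t = 0 then answer_diff s0 b else 0) + 2 * code_H * (real z - real b) + code_H))"
    by (rule sum_lessThan_mult_div_mod)
  also have "\<dots> = (\<Sum>b<R ^ k. if b \<le> z then answer_diff s0 b else 0)"
  proof (rule sum.cong[OF refl])
    fix b
    have H: "1 \<le> code_H" by (simp add: code_H_def)
    have "(\<Sum>t<(2::nat). (if t = 0 then 1 else -1) *
            max 0 ((if t = 0 then answer_diff s0 b else 0) + 2 * code_H * (real z - real b) + code_H))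
        = max 0 (answer_diff s0 b + 2 * code_H * (real z - real b) + code_H)
          - max 0 (2 * code_H * (real z - real b) + code_H)"
      by (simp add: numeral_2_eq_2)
    also have "\<dots> = (if b \<le> z then answer_diff s0 b else 0)"
      by (rule relu_gate_diff[OF answer_diff_bound[OF s0_range] H])
    finally show "(\<Sum>t<(2::nat). (if t = 0 then 1 else -1) *
            max 0 ((if t = 0 then answer_diff s0 b else 0) + 2 * code_H * (real z - real b) + code_H))
        = (if b \<le> z then answer_diff s0 b else 0)" .
  qed
  also have "\<dots> = answer s0 z"
    unfolding answer_diff_def by (rule sum_backward_differences[OF z])
  also have "\<dots> = real (khop g s0 rs)"
    unfolding answer_def z_def using radix_dec_enc[OF rs_range] length_rs by simp
  finally show ?thesis .
qed

lemma code_stream_prefix: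
  "code_stream (k - 1) (foldl (\<lambda>X L. apply_layer code_dim code_width L X) (\<lambda>j. code_emb (tokens ! j))
     (map code_layer [1..<k]))"
proof -
  have "code_stream (k - 1) (foldl (\<lambda>X L. apply_layer code_dim code_width L X) (\<lambda>j. code_emb (tokens ! j))
     (map code_layer [1..<Suc (k - 1)]))"
    by (rule foldl_apply_layer_induct) (simp_all add: code_stream_emb code_stream_step)
  then show ?thesis using k_pos by simp
qed

lemma code_transformer_outputs: "tf_outputs code_transformer (vocab N R) tokens (Subj (khop g s0 rs))"
proof -
  define X where "X = foldl (\<lambda>X L. apply_layer code_dim code_width L X) (\<lambda>j. code_emb (tokens ! j))
     (map code_layer [1..<k])"
  have X: "code_stream (k - 1) X" unfolding X_def by (rule code_stream_prefix)
  have "[1..<Suc k] = [1..<k] @ [k]" using k_pos by simp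
  then have run: "tf_run code_transformer tokens = apply_layer code_dim code_width (code_layer k) X"
    by (simp add: tf_run_def code_transformer_def X_def del: upt_Suc)
  have layer: "code_layer k = uniform_layer (code_V k) final_W1 final_b1 final_W2"
    by (simp add: code_layer_def)
  show ?thesis
  proof (rule tf_outputs_if_quadratic_logits[where co = eOut and cq = ePos and w = "real k + 1"])
    show "tf_unemb code_transformer (Subj s) = (\<lambda>c. (if c = eOut then 2 * real s else 0)
            + (if c = ePos then - ((real k + 1) * (real s)\<^sup>2) else 0))" for s
      by (simp add: code_transformer_def code_unemb_def)
    show "tf_run code_transformer tokens (length tokens - 1) eOut = real (khop g s0 rs)"
      using code_final_mlp[OF X] code_final_attn(3)[OF X]
      by (simp add: run layer apply_uniform_layer length_tokens)
    show "tf_run code_transformer tokens (length tokens - 1) ePos = 1 / (real k + 1)"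
      using code_final_attn(1)[OF X] by (simp add: run layer apply_uniform_layer length_tokens final_W2_def)
    show "khop g s0 rs \<in> {1..N}" using khop_in_range[OF g_bij s0_range rs_range] .
  qed (simp_all add: code_transformer_def code_unemb_def)
qed

end

context khop_problem
begin

lemma code_transformer_solves: "solves_khop code_transformer N R k g"
  using khop_query.code_transformer_outputs by (rule solves_khopI)

lemma code_transformer_size:
  "length (tf_layers code_transformer) = k" "tf_dim code_transformer = 6 + R ^ k"
  "tf_width code_transformer = 2 * R ^ k"
  by (simp_all add: code_transformer_def code_dim_def code_width_def)

lemma khop_transformers_exist:
  "(\<exists>T. length (tf_layers T) = k \<and> solves_khop T N R k g \<and>
        real (tf_dim T) \<le> 7 * real k \<and> real (tf_width T) \<le> 7 * real N * real R)
   \<and> (\<exists>T. length (tf_layers T) = k \<and> solves_khop T N R k g \<and>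
        real (tf_dim T) \<le> 7 * real R ^ k \<and> real (tf_width T) \<le> 7 * real R ^ k)"
proof (intro conjI[OF exI[of _ hop_transformer] exI[of _ code_transformer]] conjI)
  have "real R ^ k \<ge> 1" using R_pos by simp
  then show "real (tf_dim code_transformer) \<le> 7 * real R ^ k"
    by (simp add: code_transformer_size)
  show "real (tf_dim hop_transformer) \<le> 7 * real k"
    using k_pos by (simp add: hop_transformer_size)
qed (simp_all add: hop_transformer_size hop_transformer_solves code_transformer_size code_transformer_solves)

end

theorem theorem3:
  "\<exists>C c::real. C > 0 \<and> c \<ge> 0 \<and>
    (\<forall>N R k::nat. \<forall>g::nat \<Rightarrow> nat \<Rightarrow> nat.
       N \<ge> 1 \<longrightarrow> R \<ge> 1 \<longrightarrow> k \<ge> 1 \<longrightarrow>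
       (\<forall>r\<in>{1..R}. bij_betw (g r) {1..N} {1..N}) \<longrightarrow>
       (let L = log 2 (real (N + R + k + 2)) in
         (\<exists>T. length (tf_layers T) = k \<and> solves_khop T N R k g \<and>
              real (tf_dim T) \<le> C * real k * L powr c \<and>
              real (tf_width T) \<le> C * real N * real R) \<and>
         (\<exists>T. length (tf_layers T) = k \<and> solves_khop T N R k g \<and>
              real (tf_dim T) \<le> C * real R ^ k * L powr c \<and>
              real (tf_width T) \<le> C * real R ^ k * L powr c)))"
proof (rule exI[of _ 7], rule exI[of _ 0], intro conjI allI impI)
  fix N R k :: nat and g :: "nat \<Rightarrow> nat \<Rightarrow> nat"
  assume "N \<ge> 1" "R \<ge> 1" "k \<ge> 1" "\<forall>r\<in>{1..R}. bij_betw (g r) {1..N} {1..N}"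
  then interpret khop_problem N R k g by unfold_locales
  have "log 2 (real (N + R + k + 2)) > 0" by simp
  then have "log 2 (real (N + R + k + 2)) \<noteq> 0" by linarith
  then show "let L = log 2 (real (N + R + k + 2)) in
      (\<exists>T. length (tf_layers T) = k \<and> solves_khop T N R k g \<and>
           real (tf_dim T) \<le> 7 * real k * L powr 0 \<and> real (tf_width T) \<le> 7 * real N * real R) \<and>
      (\<exists>T. length (tf_layers T) = k \<and> solves_khop T N R k g \<and>
           real (tf_dim T) \<le> 7 * real R ^ k * L powr 0 \<and> real (tf_width T) \<le> 7 * real R ^ k * L powr 0)"
    using khop_transformers_exist by (simp add: Let_def)
qed simp_all

end
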